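(* Consider a synchronous round-based message-passing system of $n$ processes $p_1,\dots,p_n$ with reliable point-to-point channels between every pair of processes, with authentication (unforgeable signatures), in which up to $t$ processes, for any $0 \le t < n$, may be Byzantine. Then the two-round algorithm $\mathcal{A}_1$ described in the context solves $k$-set agreement for $k = \lfloor \frac{n}{n-t} \rfloor + 1$.
   Context: Model: in each round every process sends messages which are received in that same round. Every process $p_i$ has a private signing key and knows all public keys; signatures of correct processes cannot be forged, so a faulty process cannot produce or alter a value signed by a correct process; messages whose signatures are invalid are ignored (treated as not received). A Byzantine process may deviate arbitrarily from the protocol; a correct process never fails. $k$-set agreement (here decisions are allowed in $V \cup \{\bot\}$, where $\bot$ counts as a decided value): each process proposes an initial value from a set $V$; (Validity) if all correct processes propose the same value $v$, no correct process decides a value different from $v$; (Agreement) at most $k$ distinct values are decided by correct processes; (Termination) every correct process eventually decides. Algorithm $\mathcal{A}_1$, code of $p_i$ with input $v_i$: $p_i$ keeps an $n\times n$ matrix $M_i$ with all entries initially $\bot$, and sets $M_i[i][i] := v_i$. Round 1: $p_i$ sends $v_i$, signed by $p_i$, to all processes; when it receives a validly signed value $v_j$ from $p_j$ it sets $M_i[i][j] := v_j$. Round 2: $p_i$ sends its row $M_i[i][\ast]$ (each non-$\bot$ entry $M_i[i][j]$ carrying $p_j$'s signature) to all processes; when it receives such a vector from $p_j$ it stores it as $M_i[j][\ast]$ (entries without a valid signature of their originator being treated as $\bot$). At the end of round 2, $p_i$ builds a vector $V_i$ with $V_i[i] = v_i$ and, for each $j \ne i$: letting $w = M_i[i][j]$,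 if $w = \bot$ then $V_i[j] = \bot$; otherwise $V_i[j] = w$, except that $V_i[j] := \bot$ if there is $\ell \ne i$ with $M_i[\ell][j] \ne \bot$ and $M_i[\ell][j] \ne w$. Finally, if at least $n-t$ entries of $V_i$ are equal to $v_i$, $p_i$ decides $v_i$; otherwise it decides $\bot$. *)

theory Defs
  imports Main
begin

(* Processes are p_0,...,p_{n-1} (indices i < n).  F is the set of Byzantine
   processes; correct processes are those i < n with i \<notin> F.
   Option values model V \<union> {\<bottom>}: None = \<bottom>.

   v i            : input of p_i.
   r1 i j         : validly-signed value p_i receives from p_j in round 1
                    (None = nothing received / invalid signature).
   r2 i j l       : entry l of the row vector p_i receives from p_j in round 2,
                    after discarding entries lacking a valid signature of p_l. *)

text \<open>Row M_j[j][*] of process p_j at the end of round 1.\<close>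
definition own_row :: "(nat \<Rightarrow> 'v) \<Rightarrow> (nat \<Rightarrow> nat \<Rightarrow> 'v option) \<Rightarrow> nat \<Rightarrow> nat \<Rightarrow> 'v option" where
  "own_row v r1 j l = (if l = j then Some (v j) else r1 j l)"

text \<open>Admissible executions: reliable synchronous channels between correct
processes; a Byzantine process may send anything signed by itself (or by
other Byzantine processes), but cannot forge signatures of correct processes;
a correct process p_l signs only its input v l.\<close>
definition admissible ::
  "nat \<Rightarrow> nat set \<Rightarrow> (nat \<Rightarrow> 'v) \<Rightarrow> (nat \<Rightarrow> nat \<Rightarrow> 'v option) \<Rightarrow> (nat \<Rightarrow> nat \<Rightarrow> nat \<Rightarrow> 'v option) \<Rightarrow> bool" where
  "admissible n F v r1 r2 \<longleftrightarrow>
     (\<forall>i j. i < n \<and> i \<notin> F \<and> j < n \<and> j \<notin> F \<longrightarrow> r1 i j = Some (v j)) \<and>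
     (\<forall>i j l. i < n \<and> i \<notin> F \<and> j < n \<and> j \<notin> F \<and> l < n \<longrightarrow> r2 i j l = own_row v r1 j l) \<and>
     (\<forall>i j l. i < n \<and> i \<notin> F \<and> j < n \<and> j \<in> F \<and> l < n \<and> l \<notin> F \<longrightarrow>
         r2 i j l = None \<or> r2 i j l = Some (v l))"

text \<open>The vector V_i built by p_i at the end of round 2 (M_i[i][j] = r1 i j for
j \<noteq> i, and M_i[l][j] = r2 i l j for l \<noteq> i).\<close>
definition vecV ::
  "nat \<Rightarrow> (nat \<Rightarrow> 'v) \<Rightarrow> (nat \<Rightarrow> nat \<Rightarrow> 'v option) \<Rightarrow> (nat \<Rightarrow> nat \<Rightarrow> nat \<Rightarrow> 'v option) \<Rightarrow> nat \<Rightarrow> nat \<Rightarrow> 'v option" where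
  "vecV n v r1 r2 i j =
     (if j = i then Some (v i)
      else (case r1 i j of
              None \<Rightarrow> None
            | Some w \<Rightarrow> (if \<exists>l<n. l \<noteq> i \<and> r2 i l j \<noteq> None \<and> r2 i l j \<noteq> Some w
                         then None else Some w)))"

definition decideA1 ::
  "nat \<Rightarrow> nat \<Rightarrow> (nat \<Rightarrow> 'v) \<Rightarrow> (nat \<Rightarrow> nat \<Rightarrow> 'v option) \<Rightarrow> (nat \<Rightarrow> nat \<Rightarrow> nat \<Rightarrow> 'v option) \<Rightarrow> nat \<Rightarrow> 'v option" where
  "decideA1 n t v r1 r2 i =
     (if card {j. j < n \<and> vecV n v r1 r2 i j = Some (v i)} \<ge> n - t then Some (v i) else None)"

text \<open>k-set agreement (decisions in V \<union> {\<bottom>}) for the correct processes.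
Termination holds trivially since every correct process decides at the end of
round 2 (dec is a total function).\<close>
definition k_set_agreement ::
  "nat \<Rightarrow> nat set \<Rightarrow> nat \<Rightarrow> (nat \<Rightarrow> 'v) \<Rightarrow> (nat \<Rightarrow> 'v option) \<Rightarrow> bool" where
  "k_set_agreement n F k v dec \<longleftrightarrow>
     (\<forall>w. (\<forall>i<n. i \<notin> F \<longrightarrow> v i = w) \<longrightarrow> (\<forall>i<n. i \<notin> F \<longrightarrow> dec i = Some w)) \<and>
     card (dec ` {i. i < n \<and> i \<notin> F}) \<le> k"

end

theory Submission
  imports Defs
begin

text \<open>
Two correct processes never hold different non-\<bottom> entries for the same process j in
their vectors V: if p_i keeps value a for j, then every process l \<noteq> i that relayed a
signed entry for j in round 2 relayed a, and a correct p_i' relays its own round-1 entry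
for j (for j = i' its input), which must therefore be a as well. Hence the sets
{j. V_i[j] = v_i} of correct processes deciding distinct values are pairwise disjoint,
and each has at least n - t elements, so at most n div (n - t) distinct values other
than \<bottom> are decided. If all correct processes propose w, every correct p_i sees w at
all n - t correct positions, so it decides w.
\<close>

lemma card_le_div_if_disjoint_large_subsets:
  fixes S :: "'a \<Rightarrow> 'b set"
  assumes "finite A" and "0 < m"
    and sub: "\<forall>w\<in>W. S w \<subseteq> A" and large: "\<forall>w\<in>W. m \<le> card (S w)"
    and disj: "\<forall>w\<in>W. \<forall>w'\<in>W. w \<noteq> w' \<longrightarrow> S w \<inter> S w' = {}"
  shows "card W \<le> card A div m"
proof (cases "finite W")
  case True
  have fin: "\<forall>w\<in>W. finite (S w)"
    using sub \<open>finite A\<close> finite_subset by blast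
  have "card W * m = (\<Sum>w\<in>W. m)" by simp
  also have "\<dots> \<le> (\<Sum>w\<in>W. card (S w))" using large by (intro sum_mono) blast
  also have "\<dots> = card (\<Union>w\<in>W. S w)" using True fin disj by (rule card_UN_disjoint [symmetric])
  also have "\<dots> \<le> card A" using sub \<open>finite A\<close> by (intro card_mono) auto
  finally show ?thesis using \<open>0 < m\<close> by (simp add: less_eq_div_iff_mult_less_eq)
qed simp

lemma card_le_Suc_card_Some_vimage:
  assumes "finite X"
  shows "card X \<le> Suc (card (Some -` X))"
proof -
  have fin: "finite (Some -` X)" using assms by (simp add: finite_vimageI)
  have "X \<subseteq> insert None (Some ` (Some -` X))" by auto
  then have "card X \<le> card (insert None (Some ` (Some -` X)))"
    using assms by (intro card_mono) auto
  also have "\<dots> \<le> Suc (card (Some ` (Some -` X)))" by (rule card_insert_le_m1) auto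
  also have "\<dots> \<le> Suc (card (Some -` X))" using card_image_le [OF fin, of Some] by (simp only: Suc_le_mono)
  finally show ?thesis .
qed

lemma card_lessThan_diff:
  assumes "F \<subseteq> {..<n}"
  shows "card {i. i < n \<and> i \<notin> F} = n - card F"
proof -
  have "{i. i < n \<and> i \<notin> F} = {..<n} - F" by auto
  then show ?thesis using assms by (simp add: card_Diff_subset finite_subset)
qed

locale A1_execution =
  fixes n :: nat and F :: "nat set" and v :: "nat \<Rightarrow> 'v"
    and r1 :: "nat \<Rightarrow> nat \<Rightarrow> 'v option" and r2 :: "nat \<Rightarrow> nat \<Rightarrow> nat \<Rightarrow> 'v option"
  assumes admissible: "admissible n F v r1 r2"
begin

abbreviation correct :: "nat \<Rightarrow> bool" where
  "correct i \<equiv> i < n \<and> i \<notin> F"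

abbreviation V :: "nat \<Rightarrow> nat \<Rightarrow> 'v option" where
  "V \<equiv> vecV n v r1 r2"

lemma round1_correct: "correct i \<Longrightarrow> correct j \<Longrightarrow> r1 i j = Some (v j)"
  using admissible unfolding admissible_def by blast

lemma round2_correct: "correct i \<Longrightarrow> correct j \<Longrightarrow> l < n \<Longrightarrow> r2 i j l = own_row v r1 j l"
  using admissible unfolding admissible_def by blast

lemma round2_byzantine:
  "correct i \<Longrightarrow> j < n \<Longrightarrow> j \<in> F \<Longrightarrow> correct l \<Longrightarrow> r2 i j l = None \<or> r2 i j l = Some (v l)"
  using admissible unfolding admissible_def by blast

lemma V_correct:
  assumes i: "correct i" and j: "correct j"
  shows "V i j = Some (v j)"
proof (cases "j = i")
  case False
  have "r2 i l j = None \<or> r2 i l j = Some (v j)" if "l < n" for l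
  proof (cases "l \<in> F")
    case False
    then show ?thesis
      using round2_correct [OF i _ j[THEN conjunct1]] round1_correct [OF _ j] that
      by (simp add: own_row_def)
  qed (use round2_byzantine [OF i _ _ j] that in blast)
  then show ?thesis using False round1_correct [OF i j] by (auto simp: vecV_def)
qed (simp add: vecV_def)

lemma V_Some_imp_own_row: "V i j = Some a \<Longrightarrow> own_row v r1 i j = Some a"
  by (auto simp: vecV_def own_row_def split: option.splits if_splits)

lemma V_Some_imp_relayed:
  "V i j = Some a \<Longrightarrow> j \<noteq> i \<Longrightarrow> l < n \<Longrightarrow> l \<noteq> i \<Longrightarrow> r2 i l j = None \<or> r2 i l j = Some a"
  by (auto simp: vecV_def split: option.splits if_splits)

lemma V_agree:
  assumes i: "correct i" and i': "correct i'" and "j < n"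
    and a: "V i j = Some a" and b: "V i' j = Some b"
  shows "a = b"
proof -
  have agree_if_j_ne_i: "a = b"
    if "correct i" "correct i'" "j \<noteq> i" "i \<noteq> i'" "V i j = Some a" "V i' j = Some b" for i i' a b
  proof -
    have "r2 i i' j = Some b"
      using round2_correct [OF that(1,2) \<open>j < n\<close>] V_Some_imp_own_row [OF that(6)] by simp
    with V_Some_imp_relayed [OF that(5,3)] that(2,4) show "a = b" by force
  qed
  show ?thesis
  proof (cases "i = i'")
    case True
    with a b show ?thesis by simp
  next
    case False
    then consider "j \<noteq> i" | "j \<noteq> i'" by blast
    then show ?thesis
      using agree_if_j_ne_i [OF i i' _ False a b] agree_if_j_ne_i [OF i' i _ _ b a] False by metis
  qed
qed

definition support :: "nat \<Rightarrow> nat set" where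
  "support i = {j. j < n \<and> V i j = Some (v i)}"

lemma decideA1_eq_Some_iff:
  "decideA1 n t v r1 r2 i = Some w \<longleftrightarrow> w = v i \<and> n - t \<le> card (support i)"
  by (auto simp: decideA1_def support_def)

lemma decideA1_unanimous:
  assumes "F \<subseteq> {..<n}" and "card F \<le> t"
    and unanimous: "\<forall>i<n. i \<notin> F \<longrightarrow> v i = w" and i: "correct i"
  shows "decideA1 n t v r1 r2 i = Some w"
proof -
  have "{j. correct j} \<subseteq> support i"
    using V_correct [OF i] unanimous i by (auto simp: support_def)
  then have "card {j. correct j} \<le> card (support i)"
    by (intro card_mono) (auto simp: support_def)
  moreover have "n - t \<le> card {j. correct j}"
    using card_lessThan_diff [OF \<open>F \<subseteq> {..<n}\<close>] \<open>card F \<le> t\<close> by simp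
  ultimately show ?thesis using unanimous i by (simp add: decideA1_eq_Some_iff)
qed

lemma card_decided_values_le:
  assumes "t < n"
  shows "card (Some -` (decideA1 n t v r1 r2 ` {i. correct i})) \<le> n div (n - t)"
proof -
  let ?W = "Some -` (decideA1 n t v r1 r2 ` {i. correct i})"
  define holders where "holders w = {j. j < n \<and> (\<exists>i. correct i \<and> V i j = Some w)}" for w
  have large: "n - t \<le> card (holders w)" if w: "w \<in> ?W" for w
  proof -
    from w have "Some w \<in> decideA1 n t v r1 r2 ` {i. correct i}" by simp
    then obtain i where i: "correct i" and "decideA1 n t v r1 r2 i = Some w"
      by (blast dest: sym)
    then have "w = v i" and "n - t \<le> card (support i)"
      by (simp_all add: decideA1_eq_Some_iff)
    moreover have "support i \<subseteq> holders w"
      using i \<open>w = v i\<close> by (auto simp: support_def holders_def)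
    then have "card (support i) \<le> card (holders w)"
      by (intro card_mono) (simp_all add: holders_def)
    ultimately show ?thesis by linarith
  qed
  have agree: "w = w'" if holds: "j \<in> holders w" "j \<in> holders w'" for j w w'
  proof -
    obtain i i' where "correct i" "correct i'" "j < n" "V i j = Some w" "V i' j = Some w'"
      using holds by (auto simp: holders_def)
    then show ?thesis by (rule V_agree)
  qed
  have "\<forall>w\<in>?W. \<forall>w'\<in>?W. w \<noteq> w' \<longrightarrow> holders w \<inter> holders w' = {}"
    using agree by blast
  moreover have "\<forall>w\<in>?W. holders w \<subseteq> {..<n}"
    by (auto simp: holders_def)
  ultimately have "card ?W \<le> card {..<n} div (n - t)"
    using \<open>t < n\<close> large by (intro card_le_div_if_disjoint_large_subsets) simp_all
  then show ?thesis by simp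
qed

end

theorem theorem2:
  fixes n t :: nat and F :: "nat set" and v :: "nat \<Rightarrow> 'v"
    and r1 :: "nat \<Rightarrow> nat \<Rightarrow> 'v option" and r2 :: "nat \<Rightarrow> nat \<Rightarrow> nat \<Rightarrow> 'v option"
  assumes "t < n"
    and "F \<subseteq> {..<n}" and "card F \<le> t"
    and "admissible n F v r1 r2"
  shows "k_set_agreement n F (n div (n - t) + 1) v (decideA1 n t v r1 r2)"
proof -
  interpret A1_execution n F v r1 r2 using \<open>admissible n F v r1 r2\<close> by unfold_locales
  let ?decisions = "decideA1 n t v r1 r2 ` {i. correct i}"
  have "card ?decisions \<le> Suc (card (Some -` ?decisions))"
    by (intro card_le_Suc_card_Some_vimage) simp
  also have "\<dots> \<le> n div (n - t) + 1"
    using card_decided_values_le [OF \<open>t < n\<close>] by simp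
  finally show ?thesis
    using decideA1_unanimous [OF \<open>F \<subseteq> {..<n}\<close> \<open>card F \<le> t\<close>]
    by (simp add: k_set_agreement_def)
qed

end
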